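(* Let $\mathcal{X}\subseteq\mathbb{R}^m$ be countable and let $\widehat\nu = \sum_{j=1}^N\widehat\nu_j\delta_{\widehat x_j}$ be a probability mass function supported on $N$ distinct points $\widehat x_1,\dots,\widehat x_N\in\mathcal{X}$ with $\widehat\nu_j>0$ and $\sum_j\widehat\nu_j = 1$. Let $f:\mathbb{R}\to\mathbb{R}$ be convex with $f(1)=0$, and for $\varepsilon\ge0$ let $\mathbb{B}_f(\widehat\nu,\varepsilon) = \{\nu\in\mathcal{M}(\mathcal{X}) : D_f(\widehat\nu\parallel\nu)\le\varepsilon\}$. Then for any $\varepsilon\ge0$ and $x\in\mathcal{X}$ there exists $\nu^\star_f\in\mathbb{B}_f(\widehat\nu,\varepsilon)$ with $\sup_{\nu\in\mathbb{B}_f(\widehat\nu,\varepsilon)}\nu(x) = \nu^\star_f(x)$. Moreover, $\nu^\star_f$ is supported on at most $N+1$ points and $\mathrm{supp}(\nu^\star_f)\subseteq\mathrm{supp}(\widehat\nu)\cup\{x\}$.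
   Context: $\mathcal{M}(\mathcal{X})$ is the set of probability mass functions on $\mathcal{X}$. The $f$-divergence between $\nu_1,\nu_2\in\mathcal{M}(\mathcal{X})$ is $D_f(\nu_1\parallel\nu_2) = \sum_{z\in\mathcal{X}} f(\nu_1(z)/\nu_2(z))\,\nu_2(z)$. *)

theory Defs
  imports "HOL-Probability.Probability"
begin

text \<open>Recession constant of f: f'(\<infinity>) = sup over t > 0 of (f t - f 0)/t
  (= lim f(t)/t as t goes to infinity for convex f); may be +\<infinity>.\<close>
definition frec :: "(real \<Rightarrow> real) \<Rightarrow> ereal" where
  "frec f = (SUP t\<in>{0<..}. ereal ((f t - f 0) / t))"

text \<open>Perspective term b * f(a/b) with the usual conventions:
  0 * f(0/0) = 0 and 0 * f(a/0) = a * f'(\<infinity>) for a > 0.\<close>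
definition fterm :: "(real \<Rightarrow> real) \<Rightarrow> real \<Rightarrow> real \<Rightarrow> ereal" where
  "fterm f a b = (if b > 0 then ereal (b * f (a / b))
                  else if a = 0 then 0 else ereal a * frec f)"

definition fdiv :: "(real \<Rightarrow> real) \<Rightarrow> 'a set \<Rightarrow> 'a pmf \<Rightarrow> 'a pmf \<Rightarrow> ereal" where
  "fdiv f X nu1 nu2 = (\<Sum>\<^sub>\<infinity>z\<in>X. fterm f (pmf nu1 z) (pmf nu2 z))"

definition fball :: "(real \<Rightarrow> real) \<Rightarrow> 'a set \<Rightarrow> 'a pmf \<Rightarrow> real \<Rightarrow> 'a pmf set" where
  "fball f X nuhat eps = {nu. set_pmf nu \<subseteq> X \<and> fdiv f X nuhat nu \<le> ereal eps}"

end

theory Submission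
  imports Defs
begin

text \<open>
  Merging the cells of a partition can only decrease an f-divergence, because the perspective
  \<open>(a, b) \<mapsto> b f(a / b)\<close>, extended to \<open>b = 0\<close> by the recession constant \<open>f'(\<infinity>)\<close>, is
  subadditive and positively homogeneous. Merging everything except \<open>x\<close> shows that every
  \<open>\<nu>\<close> in the ball satisfies \<open>D(q, \<nu>(x)) \<le> \<epsilon>\<close>, where \<open>q = nuhat(x)\<close> and \<open>D(q, p)\<close> is the
  f-divergence between the Bernoulli laws with parameters \<open>q\<close> and \<open>p\<close>. Conversely, putting mass
  \<open>p\<close> on \<open>x\<close> and spreading \<open>1 - p\<close> over \<open>supp nuhat - {x}\<close> proportionally to \<open>nuhat\<close> gives a
  measure whose divergence is exactly \<open>D(q, p)\<close>. So the supremum is the largest \<open>p \<in> [0, 1]\<close>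
  with \<open>D(q, p) \<le> \<epsilon>\<close>. It exists because \<open>D(q, \<cdot>)\<close> is left-continuous on \<open>(0, 1]\<close> as an
  extended real: at \<open>p = 1\<close> this is the limit \<open>b f(a / b) \<rightarrow> a f'(\<infinity>)\<close> as \<open>b \<down> 0\<close>.
\<close>

lemma slope_le_frec: "t > 0 \<Longrightarrow> ereal ((f t - f 0) / t) \<le> frec f"
  unfolding frec_def by (rule SUP_upper) auto

lemma convex_slope_from_0_mono:
  assumes "convex_on UNIV f" "0 < s" "s \<le> t"
  shows "(f s - f 0) / s \<le> (f t - f 0) / t"
proof (cases "s = t")
  case False
  then have "(f 0 - f s) / (0 - s) \<le> (f 0 - f t) / (0 - t)"
    using assms by (intro convex_on_slope_le(1)) auto
  then show ?thesis
    using minus_divide_divide[of "f s - f 0" s] minus_divide_divide[of "f t - f 0" t] by simp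
qed simp

lemma tendsto_frec:
  assumes "convex_on UNIV f"
  shows "((\<lambda>t. ereal (f t / t)) \<longlongrightarrow> frec f) at_top"
proof -
  have slope: "((\<lambda>t. ereal ((f t - f 0) / t)) \<longlongrightarrow> frec f) at_top"
  proof (rule order_tendstoI)
    fix y assume "y < frec f"
    then obtain s where s: "s > 0" "y < ereal ((f s - f 0) / s)"
      unfolding frec_def less_SUP_iff by auto
    have "y < ereal ((f t - f 0) / t)" if "t \<ge> s" for t
      by (rule less_le_trans[OF s(2)]) (simp add: convex_slope_from_0_mono[OF assms s(1) that])
    then show "eventually (\<lambda>t. y < ereal ((f t - f 0) / t)) at_top"
      unfolding eventually_at_top_linorder by blast
  next
    fix y assume "frec f < y"
    then have "ereal ((f t - f 0) / t) < y" if "t \<ge> 1" for t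
      using slope_le_frec[of t f] that by simp
    then show "eventually (\<lambda>t. ereal ((f t - f 0) / t) < y) at_top"
      unfolding eventually_at_top_linorder by blast
  qed
  have "((\<lambda>t. f 0 / t) \<longlongrightarrow> 0) at_top"
    by (intro tendsto_divide_0[OF tendsto_const] filterlim_at_top_imp_at_infinity filterlim_ident)
  then have "((\<lambda>t. ereal ((f t - f 0) / t) + ereal (f 0 / t)) \<longlongrightarrow> frec f + ereal 0) at_top"
    by (intro tendsto_add_ereal_general1 slope) (simp_all add: zero_ereal_def)
  then show ?thesis
    by (simp add: diff_divide_distrib)
qed

lemma convex_increment_le_frec:
  assumes cv: "convex_on UNIV f" and s: "0 \<le> s" and d: "0 < d"
  shows "ereal (f (s + d) - f s) \<le> ereal d * frec f"
proof -
  define \<sigma> where "\<sigma> = (f (s + d) - f s) / d"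
  have bound: "\<sigma> * (T - s) / T + f s / T \<le> f T / T" if T: "T > s + d" for T
  proof -
    have "(f s - f (s + d)) / (s - (s + d)) \<le> (f s - f T) / (s - T)"
      using T d by (intro convex_on_slope_le(1)[OF cv]) auto
    then have "\<sigma> \<le> (f T - f s) / (T - s)"
      using minus_divide_divide[of "f (s + d) - f s" d] minus_divide_divide[of "f T - f s" "T - s"]
      by (simp add: \<sigma>_def)
    then have "\<sigma> * (T - s) + f s \<le> f T"
      using T d by (simp add: le_divide_eq)
    then have "(\<sigma> * (T - s) + f s) / T \<le> f T / T"
      using T s d by (intro divide_right_mono) auto
    then show ?thesis
      by (simp add: add_divide_distrib)
  qed
  have below: "eventually (\<lambda>T. ereal (\<sigma> * (T - s) / T + f s / T) \<le> ereal (f T / T)) at_top"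
    using eventually_gt_at_top[of "s + d"] by (rule eventually_mono) (simp add: bound)
  have "((\<lambda>T. \<sigma> - \<sigma> * s / T + f s / T) \<longlongrightarrow> \<sigma> - 0 + 0) at_top"
    by (intro tendsto_intros tendsto_divide_0[OF tendsto_const]
        filterlim_at_top_imp_at_infinity filterlim_ident)
  moreover have "eventually (\<lambda>T. \<sigma> - \<sigma> * s / T + f s / T = \<sigma> * (T - s) / T + f s / T) at_top"
    using eventually_gt_at_top[of 0] by eventually_elim (simp add: right_diff_distrib diff_divide_distrib)
  ultimately have "((\<lambda>T. \<sigma> * (T - s) / T + f s / T) \<longlongrightarrow> \<sigma>) at_top"
    by (simp add: Lim_transform_eventually)
  then have "ereal \<sigma> \<le> frec f"
    by (intro tendsto_le[OF trivial_limit_at_top_linorder tendsto_frec[OF cv] _ below]) simp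
  then have "ereal d * ereal \<sigma> \<le> ereal d * frec f"
    using d by (intro ereal_mult_left_mono) simp_all
  then show ?thesis
    using d by (simp add: \<sigma>_def)
qed

lemma fterm_pos: "b > 0 \<Longrightarrow> fterm f a b = ereal (b * f (a / b))"
  by (simp add: fterm_def)

lemma fterm_zero_left: "b \<ge> 0 \<Longrightarrow> fterm f 0 b = ereal (b * f 0)"
  by (auto simp: fterm_def)

lemma fterm_zero_right: "a \<ge> 0 \<Longrightarrow> fterm f a 0 = ereal a * frec f"
  by (auto simp: fterm_def zero_ereal_def[symmetric])

lemma fterm_diag: "a \<ge> 0 \<Longrightarrow> f 1 = 0 \<Longrightarrow> fterm f a a = 0"
  by (auto simp: fterm_def)

lemma fterm_scale:
  assumes "t \<ge> 0" "a \<ge> 0" "b \<ge> 0"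
  shows "fterm f (t * a) (t * b) = ereal t * fterm f a b"
  using assms by (cases "t = 0"; cases "b = 0") (auto simp: fterm_def mult.assoc[symmetric])

lemma perspective_subadd:
  assumes cv: "convex_on UNIV f" and b1: "b1 > 0" and b2: "b2 > 0"
  shows "(b1 + b2) * f ((a1 + a2) / (b1 + b2)) \<le> b1 * f (a1 / b1) + b2 * f (a2 / b2)"
proof -
  define l where "l = b2 / (b1 + b2)"
  have l: "0 \<le> l" "l \<le> 1" "(b1 + b2) * (1 - l) = b1" "(b1 + b2) * l = b2"
    using b1 b2 by (auto simp: l_def field_simps)
  have "(1 - l) * (a1 / b1) = a1 / (b1 + b2)" "l * (a2 / b2) = a2 / (b1 + b2)"
    using b1 b2 by (simp_all add: l_def field_simps)
  then have "(a1 + a2) / (b1 + b2) = (1 - l) * (a1 / b1) + l * (a2 / b2)"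
    by (simp add: add_divide_distrib)
  moreover have "f ((1 - l) *\<^sub>R (a1 / b1) + l *\<^sub>R (a2 / b2)) \<le> (1 - l) * f (a1 / b1) + l * f (a2 / b2)"
    using l by (intro convex_onD[OF cv]) auto
  ultimately have "(b1 + b2) * f ((a1 + a2) / (b1 + b2))
      \<le> (b1 + b2) * ((1 - l) * f (a1 / b1) + l * f (a2 / b2))"
    using b1 b2 by (intro mult_left_mono) auto
  also have "\<dots> = b1 * f (a1 / b1) + b2 * f (a2 / b2)"
    by (simp only: distrib_left mult.assoc[symmetric] l(3,4))
  finally show ?thesis .
qed

lemma fterm_add_left_le:
  assumes cv: "convex_on UNIV f" and a1: "a1 \<ge> 0" and a2: "a2 \<ge> 0" and b: "b \<ge> 0"
  shows "fterm f (a1 + a2) b \<le> ereal a1 * frec f + fterm f a2 b"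
proof (cases "b > 0 \<and> a1 > 0")
  case True
  then have "ereal (f (a2 / b + a1 / b) - f (a2 / b)) \<le> ereal (a1 / b) * frec f"
    using a2 by (intro convex_increment_le_frec[OF cv]) auto
  then have "ereal b * ereal (f (a2 / b + a1 / b) - f (a2 / b)) \<le> ereal b * (ereal (a1 / b) * frec f)"
    using b by (intro ereal_mult_left_mono) auto
  then have "ereal (b * f ((a1 + a2) / b) - b * f (a2 / b)) \<le> ereal a1 * frec f"
    using True by (simp add: mult.assoc[symmetric] right_diff_distrib add_divide_distrib add.commute)
  then have "ereal (b * f ((a1 + a2) / b) - b * f (a2 / b)) + ereal (b * f (a2 / b))
      \<le> ereal a1 * frec f + ereal (b * f (a2 / b))"
    by (rule add_right_mono)
  then show ?thesis
    using True by (simp add: fterm_pos)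
next
  case False
  then consider "b = 0" | "a1 = 0"
    using a1 b by linarith
  then show ?thesis
  proof cases
    case 1
    then show ?thesis
      using a1 a2 ereal_left_distrib[of "ereal a1" "ereal a2" "frec f"] by (simp add: fterm_zero_right)
  qed (simp add: zero_ereal_def[symmetric])
qed

lemma fterm_subadd:
  assumes cv: "convex_on UNIV f"
    and "a1 \<ge> 0" "a2 \<ge> 0" "b1 \<ge> 0" "b2 \<ge> 0"
  shows "fterm f (a1 + a2) (b1 + b2) \<le> fterm f a1 b1 + fterm f a2 b2"
proof -
  consider "b1 > 0" "b2 > 0" | "b1 = 0" | "b2 = 0"
    using assms by linarith
  then show ?thesis
  proof cases
    case 1
    then show ?thesis
      using perspective_subadd[OF cv, of b1 b2 a1 a2] by (simp add: fterm_pos)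
  next
    case 2
    then show ?thesis
      using fterm_add_left_le[OF cv, of a1 a2 b2] assms by (simp add: fterm_zero_right)
  next
    case 3
    then show ?thesis
      using fterm_add_left_le[OF cv, of a2 a1 b1] assms by (simp add: fterm_zero_right add.commute)
  qed
qed

lemma fterm_sum:
  assumes cv: "convex_on UNIV f" and "finite I"
    and "\<And>i. i \<in> I \<Longrightarrow> a i \<ge> 0" "\<And>i. i \<in> I \<Longrightarrow> b i \<ge> 0"
  shows "fterm f (\<Sum>i\<in>I. a i) (\<Sum>i\<in>I. b i) \<le> (\<Sum>i\<in>I. fterm f (a i) (b i))"
  using assms(2-)
proof (induction I rule: finite_induct)
  case empty
  then show ?case by (simp add: fterm_def)
next
  case (insert i I)
  then have "fterm f (\<Sum>i\<in>insert i I. a i) (\<Sum>i\<in>insert i I. b i)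
      \<le> fterm f (a i) (b i) + fterm f (\<Sum>i\<in>I. a i) (\<Sum>i\<in>I. b i)"
    by (simp add: fterm_subadd[OF cv] sum_nonneg)
  also have "\<dots> \<le> fterm f (a i) (b i) + (\<Sum>i\<in>I. fterm f (a i) (b i))"
    using insert by (intro add_left_mono) auto
  finally show ?case
    using insert by simp
qed

lemma isCont_fterm:
  assumes cv: "convex_on UNIV f" and b: "b > 0"
  shows "isCont (fterm f a) b"
proof -
  have "isCont f (a / b)"
    using convex_on_continuous[OF open_UNIV cv] continuous_on_eq_continuous_at[OF open_UNIV] by blast
  moreover have "((\<lambda>b'. a / b') \<longlongrightarrow> a / b) (at b)"
    using b by (intro tendsto_intros) auto
  ultimately have "((\<lambda>b'. f (a / b')) \<longlongrightarrow> f (a / b)) (at b)"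
    by (rule isCont_tendsto_compose)
  then have "((\<lambda>b'. b' * f (a / b')) \<longlongrightarrow> b * f (a / b)) (at b)"
    by (intro tendsto_intros)
  then have "((\<lambda>b'. ereal (b' * f (a / b'))) \<longlongrightarrow> ereal (b * f (a / b))) (at b)"
    by (rule tendsto_ereal)
  moreover have "eventually (\<lambda>b'. ereal (b' * f (a / b')) = fterm f a b') (at b)"
    using order_tendstoD(1)[OF tendsto_ident_at b] by (rule eventually_mono) (simp add: fterm_pos)
  ultimately have "(fterm f a \<longlongrightarrow> ereal (b * f (a / b))) (at b)"
    by (rule Lim_transform_eventually)
  then show ?thesis
    using b by (simp add: isCont_def fterm_pos)
qed

lemma fterm_tendsto_at_right_0:
  assumes cv: "convex_on UNIV f" and a: "a \<ge> 0"
  shows "(fterm f a \<longlongrightarrow> fterm f a 0) (at_right 0)"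
proof (cases "a = 0")
  case True
  have "((\<lambda>b. ereal (b * f 0)) \<longlongrightarrow> ereal (0 * f 0)) (at_right 0)"
    by (intro tendsto_intros)
  moreover have "eventually (\<lambda>b. ereal (b * f 0) = fterm f a b) (at_right 0)"
    using eventually_at_right_less[of 0] by (rule eventually_mono) (simp add: True fterm_zero_left)
  ultimately have "(fterm f a \<longlongrightarrow> ereal (0 * f 0)) (at_right 0)"
    by (rule Lim_transform_eventually)
  then show ?thesis
    using True by (simp add: fterm_zero_left)
next
  case False
  then have a: "a > 0" using a by simp
  have "filterlim (\<lambda>b. a * inverse b) at_top (at_right 0)"
    by (rule filterlim_tendsto_pos_mult_at_top[OF tendsto_const a filterlim_inverse_at_top_right])
  then have "((\<lambda>b. ereal (f (a / b) / (a / b))) \<longlongrightarrow> frec f) (at_right 0)"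
    by (intro filterlim_compose[OF tendsto_frec[OF cv]]) (simp add: divide_inverse)
  then have "((\<lambda>b. ereal a * ereal (f (a / b) / (a / b))) \<longlongrightarrow> ereal a * frec f) (at_right 0)"
    by (intro tendsto_cmult_ereal) simp_all
  moreover have "eventually (\<lambda>b. ereal a * ereal (f (a / b) / (a / b)) = fterm f a b) (at_right 0)"
    using eventually_at_right_less[of 0] by (rule eventually_mono) (use a in \<open>simp add: fterm_pos\<close>)
  ultimately show ?thesis
    using a by (simp add: fterm_zero_right Lim_transform_eventually)
qed

definition fdiv_bernoulli :: "(real \<Rightarrow> real) \<Rightarrow> real \<Rightarrow> real \<Rightarrow> ereal" where
  "fdiv_bernoulli f q p = fterm f q p + fterm f (1 - q) (1 - p)"

lemma fdiv_bernoulli_self: "f 1 = 0 \<Longrightarrow> 0 \<le> q \<Longrightarrow> q \<le> 1 \<Longrightarrow> fdiv_bernoulli f q q = 0"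
  by (simp add: fdiv_bernoulli_def fterm_diag)

lemma fdiv_bernoulli_tendsto_at_left:
  assumes cv: "convex_on UNIV f" and q: "q \<le> 1" and s: "0 < s" "s \<le> 1"
  shows "(fdiv_bernoulli f q \<longlongrightarrow> fdiv_bernoulli f q s) (at_left s)"
proof -
  have "(fterm f q \<longlongrightarrow> fterm f q s) (at_left s)"
    by (rule isCont_tendsto_compose[OF isCont_fterm[OF cv s(1)] tendsto_ident_at])
  moreover have "((\<lambda>p. fterm f (1 - q) (1 - p)) \<longlongrightarrow> fterm f (1 - q) (1 - s)) (at_left s)"
  proof (cases "s < 1")
    case True
    have "((\<lambda>p. 1 - p) \<longlongrightarrow> 1 - s) (at_left s)"
      by (intro tendsto_intros)
    then show ?thesis
      using True by (intro isCont_tendsto_compose[OF isCont_fterm[OF cv]]) auto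
  next
    case False
    then have "s = 1" using s by simp
    have "((\<lambda>p. 1 - p) \<longlongrightarrow> 0) (at_left (1::real))"
      using tendsto_diff[OF tendsto_const[of 1] tendsto_ident_at[of 1 "{..<1}"]] by simp
    moreover have "eventually (\<lambda>p. 1 - p > 0) (at_left (1::real))"
      using eventually_at_left_real[of 0 "1::real"] by (rule eventually_mono) auto
    ultimately have "filterlim (\<lambda>p. 1 - p) (at_right 0) (at_left (1::real))"
      by (rule tendsto_imp_filterlim_at_right)
    moreover have "(fterm f (1 - q) \<longlongrightarrow> fterm f (1 - q) 0) (at_right 0)"
      using q by (intro fterm_tendsto_at_right_0[OF cv]) simp
    ultimately have "((\<lambda>p. fterm f (1 - q) (1 - p)) \<longlongrightarrow> fterm f (1 - q) 0) (at_left 1)"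
      by (rule filterlim_compose[rotated])
    then show ?thesis
      using \<open>s = 1\<close> by simp
  qed
  ultimately show ?thesis
    unfolding fdiv_bernoulli_def using s by (intro tendsto_add_ereal_general2) (simp_all add: fterm_pos)
qed

lemma fdiv_bernoulli_sublevel_has_max:
  assumes cv: "convex_on UNIV f" and f1: "f 1 = 0" and q: "0 \<le> q" "q \<le> 1" and eps: "0 \<le> eps"
  obtains s where "0 \<le> s" "s \<le> 1" "fdiv_bernoulli f q s \<le> ereal eps"
    "\<And>p. 0 \<le> p \<Longrightarrow> p \<le> 1 \<Longrightarrow> fdiv_bernoulli f q p \<le> ereal eps \<Longrightarrow> p \<le> s"
proof -
  define A where "A = {p. 0 \<le> p \<and> p \<le> 1 \<and> fdiv_bernoulli f q p \<le> ereal eps}"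
  have qA: "q \<in> A"
    using q eps by (simp add: A_def fdiv_bernoulli_self[of f, OF f1])
  have bdd: "bdd_above A"
    by (rule bdd_aboveI[of _ 1]) (simp add: A_def)
  have upper: "p \<le> Sup A" if "p \<in> A" for p
    using that bdd by (rule cSup_upper)
  have "Sup A \<in> A"
  proof (rule ccontr)
    assume notin: "Sup A \<notin> A"
    have "Sup A \<le> 1"
      using qA by (intro cSup_least) (auto simp: A_def)
    moreover have "0 < Sup A"
      using upper[OF qA] qA notin q by (cases "q = Sup A") auto
    ultimately have lim: "(fdiv_bernoulli f q \<longlongrightarrow> fdiv_bernoulli f q (Sup A)) (at_left (Sup A))"
      using q by (intro fdiv_bernoulli_tendsto_at_left[OF cv])
    have "A \<subseteq> {..<Sup A}"
      using upper notin by (metis lessThan_iff order_le_neq_trans subsetI)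
    then have "(fdiv_bernoulli f q \<longlongrightarrow> fdiv_bernoulli f q (Sup A)) (at (Sup A) within A)"
      by (rule tendsto_mono[OF at_le lim])
    moreover have "eventually (\<lambda>p. fdiv_bernoulli f q p \<le> ereal eps) (at (Sup A) within A)"
      by (auto simp: eventually_at_filter A_def)
    moreover have "\<not> trivial_limit (at (Sup A) within A)"
      unfolding trivial_limit_within using closure_contains_Sup[OF _ bdd] qA notin
      by (auto simp: closure_def)
    ultimately have "fdiv_bernoulli f q (Sup A) \<le> ereal eps"
      by (rule tendsto_upperbound)
    then show False
      using notin \<open>0 < Sup A\<close> \<open>Sup A \<le> 1\<close> by (simp add: A_def)
  qed
  then show ?thesis
    using upper by (intro that[of "Sup A"]) (auto simp: A_def)
qed

lemma has_sum_ereal_finite_Un: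
  fixes h :: "'a \<Rightarrow> ereal"
  assumes F: "finite F" and disj: "F \<inter> B = {}" and B: "(h has_sum T) B" and T: "\<bar>T\<bar> \<noteq> \<infinity>"
  shows "(h has_sum (sum h F + T)) (F \<union> B)"
proof -
  have "filterlim (\<lambda>G. G \<inter> B) (finite_subsets_at_top B) (finite_subsets_at_top (F \<union> B))"
    unfolding filterlim_finite_subsets_at_top eventually_finite_subsets_at_top by blast
  then have "((\<lambda>G. sum h (G \<inter> B)) \<longlongrightarrow> T) (finite_subsets_at_top (F \<union> B))"
    using B unfolding has_sum_def by (rule filterlim_compose[rotated])
  then have "((\<lambda>G. sum h F + sum h (G \<inter> B)) \<longlongrightarrow> sum h F + T) (finite_subsets_at_top (F \<union> B))"
    by (rule tendsto_add_ereal_general1[OF T tendsto_const])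
  moreover have "eventually (\<lambda>G. sum h F + sum h (G \<inter> B) = sum h G) (finite_subsets_at_top (F \<union> B))"
    unfolding eventually_finite_subsets_at_top
  proof (intro exI[of _ F] conjI allI impI)
    fix G assume G: "finite G \<and> F \<subseteq> G \<and> G \<subseteq> F \<union> B"
    then have "G = F \<union> (G \<inter> B)" "F \<inter> (G \<inter> B) = {}"
      using disj by auto
    then show "sum h F + sum h (G \<inter> B) = sum h G"
      using F G by (metis finite_Int sum.union_disjoint)
  qed (use F in auto)
  ultimately show ?thesis
    unfolding has_sum_def by (rule Lim_transform_eventually)
qed

lemma has_sum_ereal:
  "(g has_sum T) B \<Longrightarrow> ((\<lambda>z. ereal (g z)) has_sum ereal T) B"
  using has_sum_comm_additive_general[of B ereal g T] by (simp add: o_def tendsto_ereal[OF tendsto_ident_at])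

lemma has_sum_pmf: "(pmf p has_sum measure_pmf.prob p A) A"
proof -
  have "pmf p summable_on A"
    by (rule abs_summable_summable) (subst abs_summable_equivalent, rule pmf_abs_summable)
  then show ?thesis
    by (metis has_sum_infsum infsetsum_infsum pmf_abs_summable measure_pmf_conv_infsetsum)
qed

lemma fdiv_eq_sum_plus_tail:
  assumes fin: "finite S" and hat: "set_pmf nuhat \<subseteq> S" and SX: "S \<subseteq> X"
  shows "fdiv f X nuhat nu
    = (\<Sum>z\<in>S. fterm f (pmf nuhat z) (pmf nu z)) + ereal (measure_pmf.prob nu (X - S) * f 0)"
proof -
  define h where "h z = fterm f (pmf nuhat z) (pmf nu z)" for z
  define T where "T = ereal (measure_pmf.prob nu (X - S) * f 0)"
  have "h z = ereal (pmf nu z * f 0)" if "z \<in> X - S" for z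
  proof -
    have "pmf nuhat z = 0"
      using that hat by (auto simp: set_pmf_iff)
    then show ?thesis
      by (simp add: h_def fterm_zero_left)
  qed
  moreover have "((\<lambda>z. ereal (pmf nu z * f 0)) has_sum T) (X - S)"
    unfolding T_def by (intro has_sum_ereal has_sum_cmult_left has_sum_pmf)
  ultimately have tail: "(h has_sum T) (X - S)"
    by (subst has_sum_cong)
  have "(h has_sum (sum h S + T)) (S \<union> (X - S))"
    by (rule has_sum_ereal_finite_Un[OF fin _ tail]) (auto simp: T_def)
  moreover have "S \<union> (X - S) = X"
    using SX by blast
  ultimately have "infsum h X = sum h S + T"
    by (intro infsumI) simp
  then show ?thesis
    unfolding fdiv_def h_def T_def .
qed

lemma fdiv_bernoulli_le_fdiv:
  fixes nuhat nu :: "'a pmf"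
  assumes cv: "convex_on UNIV f" and fin: "finite (set_pmf nuhat)" and hatX: "set_pmf nuhat \<subseteq> X"
    and x: "x \<in> X" and nuX: "set_pmf nu \<subseteq> X"
  shows "fdiv_bernoulli f (pmf nuhat x) (pmf nu x) \<le> fdiv f X nuhat nu"
proof -
  define S where "S = insert x (set_pmf nuhat)"
  define R where "R = measure_pmf.prob nu (X - S)"
  define h where "h z = fterm f (pmf nuhat z) (pmf nu z)" for z
  have S: "finite S" "x \<in> S" "set_pmf nuhat \<subseteq> S" "S \<subseteq> X"
    using fin hatX x by (auto simp: S_def)
  have "(\<Sum>z\<in>S - {x}. pmf nuhat z) = 1 - pmf nuhat x"
    using sum_pmf_eq_1[OF S(1,3)] sum.remove[OF S(1,2), of "pmf nuhat"] by simp
  moreover have "(\<Sum>z\<in>S - {x}. pmf nu z) + R = 1 - pmf nu x"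
  proof -
    have "(\<Sum>z\<in>S - {x}. pmf nu z) + R = measure_pmf.prob nu (S - {x}) + R"
      using S by (simp add: measure_measure_pmf_finite)
    also have "\<dots> = measure_pmf.prob nu ((S - {x}) \<union> (X - S))"
      unfolding R_def by (rule measure_pmf.finite_measure_Union[symmetric]) auto
    also have "(S - {x}) \<union> (X - S) = X - {x}"
      using S by auto
    also have "measure_pmf.prob nu (X - {x}) = measure_pmf.prob nu (- {x})"
    proof -
      have "(X - {x}) \<inter> set_pmf nu = - {x} \<inter> set_pmf nu"
        using nuX by auto
      then show ?thesis
        by (metis measure_Int_set_pmf)
    qed
    also have "\<dots> = 1 - pmf nu x"
      using measure_pmf.prob_compl[of "{x}" nu]
      by (simp add: measure_Int_set_pmf Compl_eq_Diff_UNIV measure_pmf_single)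
    finally show ?thesis .
  qed
  ultimately have "fdiv_bernoulli f (pmf nuhat x) (pmf nu x)
      = h x + fterm f ((\<Sum>z\<in>S - {x}. pmf nuhat z) + 0) ((\<Sum>z\<in>S - {x}. pmf nu z) + R)"
    by (simp add: fdiv_bernoulli_def h_def)
  also have "\<dots> \<le> h x + (fterm f (\<Sum>z\<in>S - {x}. pmf nuhat z) (\<Sum>z\<in>S - {x}. pmf nu z) + fterm f 0 R)"
    by (intro add_left_mono fterm_subadd[OF cv]) (simp_all add: R_def sum_nonneg)
  also have "\<dots> \<le> h x + (sum h (S - {x}) + fterm f 0 R)"
    unfolding h_def using S by (intro add_left_mono add_right_mono fterm_sum[OF cv]) auto
  also have "\<dots> = sum h S + ereal (R * f 0)"
    using sum.remove[OF S(1,2), of h] by (simp add: R_def fterm_zero_left add.assoc)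
  also have "\<dots> = fdiv f X nuhat nu"
    unfolding h_def R_def by (rule fdiv_eq_sum_plus_tail[OF S(1,3,4), symmetric])
  finally show ?thesis .
qed

text \<open>\<open>p \<delta>\<^sub>x + (1 - p) nu(\<cdot> | - {x})\<close>; the conditioning is junk unless \<open>pmf nu x < 1\<close>.\<close>

definition mix_point_pmf :: "real \<Rightarrow> 'a \<Rightarrow> 'a pmf \<Rightarrow> 'a pmf" where
  "mix_point_pmf p x nu =
    bind_pmf (bernoulli_pmf p) (\<lambda>b. if b then return_pmf x else cond_pmf nu (- {x}))"

lemma set_pmf_Int_Compl_nonempty: "pmf nu x < 1 \<Longrightarrow> set_pmf nu \<inter> - {x} \<noteq> {}"
  using sum_pmf_eq_1[of "{x}" nu] by fastforce

lemma pmf_mix_point_pmf: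
  assumes "pmf nu x < 1" "0 \<le> p" "p \<le> 1"
  shows "pmf (mix_point_pmf p x nu) z = (if z = x then p else (1 - p) / (1 - pmf nu x) * pmf nu z)"
proof -
  have "measure_pmf.prob nu (- {x}) = 1 - pmf nu x"
    using measure_pmf.prob_compl[of "{x}" nu] by (simp add: Compl_eq_Diff_UNIV measure_pmf_single)
  then show ?thesis
    using assms pmf_cond[OF set_pmf_Int_Compl_nonempty[OF assms(1)], of z]
    by (auto simp: mix_point_pmf_def pmf_bind)
qed

lemma set_mix_point_pmf:
  assumes "pmf nu x < 1"
  shows "set_pmf (mix_point_pmf p x nu) \<subseteq> insert x (set_pmf nu)"
proof -
  have "set_pmf (if b then return_pmf x else cond_pmf nu (- {x})) \<subseteq> insert x (set_pmf nu)" for b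
    using set_cond_pmf[OF set_pmf_Int_Compl_nonempty[OF assms]] by auto
  then show ?thesis
    unfolding mix_point_pmf_def set_bind_pmf by blast
qed

lemma fdiv_mix_point_pmf:
  fixes nuhat :: "'a pmf"
  assumes fin: "finite (set_pmf nuhat)" and X: "insert x (set_pmf nuhat) \<subseteq> X"
    and q: "pmf nuhat x < 1" and p: "0 \<le> p" "p \<le> 1"
  shows "fdiv f X nuhat (mix_point_pmf p x nuhat) = fdiv_bernoulli f (pmf nuhat x) p"
proof -
  define S where "S = insert x (set_pmf nuhat)"
  define nu where "nu = mix_point_pmf p x nuhat"
  define c where "c = (1 - p) / (1 - pmf nuhat x)"
  define h where "h z = fterm f (pmf nuhat z) (pmf nu z)" for z
  have S: "finite S" "x \<in> S" "set_pmf nuhat \<subseteq> S" "S \<subseteq> X"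
    using fin X by (auto simp: S_def)
  have c: "c \<ge> 0" "(1 - pmf nuhat x) * c = 1 - p"
    using q p by (auto simp: c_def)
  have "measure_pmf.prob nu (X - S) = 0"
    using set_mix_point_pmf[OF q, of p] by (auto simp: measure_pmf_zero_iff nu_def S_def)
  then have "fdiv f X nuhat nu = h x + sum h (S - {x})"
    using fdiv_eq_sum_plus_tail[OF S(1,3,4), of f nu] sum.remove[OF S(1,2), of h]
    by (simp add: h_def)
  also have "h x = fterm f (pmf nuhat x) p"
    using pmf_mix_point_pmf[OF q p, of x] by (simp add: h_def nu_def)
  also have "sum h (S - {x}) = (\<Sum>z\<in>S - {x}. ereal (pmf nuhat z) * fterm f 1 c)"
  proof (rule sum.cong)
    fix z assume "z \<in> S - {x}"
    then have "h z = fterm f (pmf nuhat z * 1) (pmf nuhat z * c)"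
      using pmf_mix_point_pmf[OF q p, of z] by (simp add: h_def nu_def c_def mult.commute)
    then show "h z = ereal (pmf nuhat z) * fterm f 1 c"
      using c fterm_scale[of "pmf nuhat z" 1 c f] by simp
  qed simp
  also have "\<dots> = ereal (\<Sum>z\<in>S - {x}. pmf nuhat z) * fterm f 1 c"
    using sum_ereal_left_distrib[of "S - {x}" "\<lambda>z. ereal (pmf nuhat z)" "fterm f 1 c"] by simp
  also have "(\<Sum>z\<in>S - {x}. pmf nuhat z) = 1 - pmf nuhat x"
    using sum_pmf_eq_1[OF S(1,3)] sum.remove[OF S(1,2), of "pmf nuhat"] by simp
  also have "ereal (1 - pmf nuhat x) * fterm f 1 c = fterm f (1 - pmf nuhat x) (1 - p)"
    using fterm_scale[of "1 - pmf nuhat x" 1 c f] q c by simp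
  finally show ?thesis
    by (simp add: nu_def fdiv_bernoulli_def)
qed

lemma fdiv_self: "f 1 = 0 \<Longrightarrow> fdiv f X nu nu = 0"
  by (simp add: fdiv_def fterm_diag)

lemma fball_has_max_pmf_at:
  fixes nuhat :: "'a pmf"
  assumes fin: "finite (set_pmf nuhat)" and hatX: "set_pmf nuhat \<subseteq> X"
    and cv: "convex_on UNIV f" and f1: "f 1 = 0" and eps: "0 \<le> eps" and x: "x \<in> X"
  obtains nustar where "nustar \<in> fball f X nuhat eps"
    "\<And>nu. nu \<in> fball f X nuhat eps \<Longrightarrow> pmf nu x \<le> pmf nustar x"
    "set_pmf nustar \<subseteq> insert x (set_pmf nuhat)"
proof (cases "pmf nuhat x < 1")
  case False
  then have "pmf nuhat x = 1"
    using pmf_le_1[of nuhat x] by simp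
  then show ?thesis
    using hatX eps by (intro that[of nuhat]) (auto simp: fball_def fdiv_self[of f, OF f1] pmf_le_1)
next
  case True
  obtain s where s: "0 \<le> s" "s \<le> 1" "fdiv_bernoulli f (pmf nuhat x) s \<le> ereal eps"
    and s_max: "\<And>p. 0 \<le> p \<Longrightarrow> p \<le> 1 \<Longrightarrow> fdiv_bernoulli f (pmf nuhat x) p \<le> ereal eps \<Longrightarrow> p \<le> s"
    using fdiv_bernoulli_sublevel_has_max[OF cv f1 pmf_nonneg[of nuhat x] pmf_le_1[of nuhat x] eps]
    by blast
  show ?thesis
  proof (rule that[of "mix_point_pmf s x nuhat"])
    show set: "set_pmf (mix_point_pmf s x nuhat) \<subseteq> insert x (set_pmf nuhat)"
      by (rule set_mix_point_pmf[OF True])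
    show "mix_point_pmf s x nuhat \<in> fball f X nuhat eps"
      using set hatX x s fdiv_mix_point_pmf[OF fin _ True s(1,2), of X f] by (auto simp: fball_def)
    fix nu assume "nu \<in> fball f X nuhat eps"
    then have "fdiv_bernoulli f (pmf nuhat x) (pmf nu x) \<le> ereal eps"
      using fdiv_bernoulli_le_fdiv[OF cv fin hatX x, of nu] by (auto simp: fball_def)
    then show "pmf nu x \<le> pmf (mix_point_pmf s x nuhat) x"
      using s_max[of "pmf nu x"] pmf_mix_point_pmf[OF True s(1,2), of x] by (simp add: pmf_le_1)
  qed
qed

theorem mainTheorem11:
  fixes X :: "(real ^ 'm) set" and nuhat :: "(real ^ 'm) pmf"
    and f :: "real \<Rightarrow> real" and eps :: real and x :: "real ^ 'm"
  assumes "countable X"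
    and "finite (set_pmf nuhat)" and "set_pmf nuhat \<subseteq> X"
    and "convex_on UNIV f" and "f 1 = 0"
    and "eps \<ge> 0" and "x \<in> X"
  shows "\<exists>nustar. nustar \<in> fball f X nuhat eps
           \<and> (SUP nu\<in>fball f X nuhat eps. pmf nu x) = pmf nustar x
           \<and> card (set_pmf nustar) \<le> card (set_pmf nuhat) + 1
           \<and> set_pmf nustar \<subseteq> set_pmf nuhat \<union> {x}"
proof -
  obtain nustar where ball: "nustar \<in> fball f X nuhat eps"
    and max: "\<And>nu. nu \<in> fball f X nuhat eps \<Longrightarrow> pmf nu x \<le> pmf nustar x"
    and supp: "set_pmf nustar \<subseteq> insert x (set_pmf nuhat)"
    using fball_has_max_pmf_at[OF assms(2-7)] by blast
  have "(SUP nu\<in>fball f X nuhat eps. pmf nu x) = pmf nustar x"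
    using ball max by (intro cSup_eq_maximum) auto
  moreover have "card (set_pmf nustar) \<le> card (set_pmf nuhat) + 1"
    using card_mono[OF _ supp] assms(2) by (metis Suc_eq_plus1 card_insert_if finite_insert le_SucI)
  ultimately show ?thesis
    using ball supp by auto
qed

end
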